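(* Let $x=(x_n)_{n\in\mathbb{Z}}$ be an integer-valued sequence. For every $i\in\mathbb{Z}$, the set of descendants of $i$ in the record graph of $x$ is $$D(i)=\{j\in\mathbb{Z}: L_x(i)\le j\le i\},$$ where, if $L_x(i)=-\infty$, this is $\{j\in\mathbb{Z}:j\le i\}$.
   Context: Write $y(j,k)=\sum_{l=j}^{k-1}x_l$ for $j<k$. The record map is $R_x(i)=\inf\{n>i: y(i,n)\ge0\}$ if this set is nonempty, and $R_x(i)=i$ otherwise; the record graph has vertex set $\mathbb{Z}$ and directed edges $i\to R_x(i)$ for $R_x(i)\neq i$. $D(i)=\{i\}\cup\{j\ne i: R_x^n(j)=i\text{ for some }n\ge1\}$. Define $L_x(i)=\inf\{j<i: y(k,i)\ge0\text{ for all }j\le k<i\}\in\mathbb{Z}\cup\{-\infty\}$ if this set is nonempty, and $L_x(i)=i$ otherwise. *)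

theory Defs
  imports Main "HOL-Library.Extended_Real"
begin

definition ysum :: "(int \<Rightarrow> int) \<Rightarrow> int \<Rightarrow> int \<Rightarrow> int" where
  "ysum x j k = (\<Sum>l\<in>{j..<k}. x l)"

definition record_map :: "(int \<Rightarrow> int) \<Rightarrow> int \<Rightarrow> int" where
  "record_map x i = (if {n. n > i \<and> ysum x i n \<ge> 0} \<noteq> {}
     then (LEAST n. n > i \<and> ysum x i n \<ge> 0) else i)"

definition descendants :: "(int \<Rightarrow> int) \<Rightarrow> int \<Rightarrow> int set" where
  "descendants x i = {i} \<union> {j. j \<noteq> i \<and> (\<exists>n::nat. n \<ge> 1 \<and> (record_map x ^^ n) j = i)}"

definition Lx :: "(int \<Rightarrow> int) \<Rightarrow> int \<Rightarrow> ereal" where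
  "Lx x i = (let S = {j. j < i \<and> (\<forall>k. j \<le> k \<and> k < i \<longrightarrow> ysum x k i \<ge> 0)}
     in if S = {} then ereal (of_int i) else Inf ((\<lambda>j. ereal (of_int j)) ` S))"

end

theory Submission
  imports Defs
begin

text \<open>
  Call \<open>(j, i)\<close> a non-negative tail when \<open>j < i\<close> and \<open>y(k,i) \<ge> 0\<close> for all \<open>j \<le> k < i\<close>.
  Every record edge \<open>j \<rightarrow> R(j)\<close> is one: the sums \<open>y(j,k)\<close> for \<open>j < k < R(j)\<close> are negative,
  so \<open>y(k,R(j)) = y(j,R(j)) - y(j,k) \<ge> 0\<close>. Non-negative tails compose, hence every descendant
  \<open>j \<noteq> i\<close> of \<open>i\<close> gives a non-negative tail \<open>(j, i)\<close>. Conversely, for such a tail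
  \<open>y(j,i) \<ge> 0\<close> forces \<open>R(j) \<le> i\<close>, and \<open>(R(j), i)\<close> is again a non-negative tail unless
  \<open>R(j) = i\<close>, so iterating \<open>R\<close> from \<open>j\<close> reaches \<open>i\<close>. Finally the left ends \<open>j\<close> of the
  non-negative tails \<open>(j, i)\<close> form an interval ending at \<open>i - 1\<close>, whose infimum is \<open>L(i)\<close>.
\<close>

lemma ysum_split:
  assumes "a \<le> b" "b \<le> c"
  shows "ysum x a c = ysum x a b + ysum x b c"
proof -
  have "{a..<c} = {a..<b} \<union> {b..<c}" using assms by auto
  then show ?thesis unfolding ysum_def
    by (simp add: sum.union_disjoint ivl_disj_int_two(3))
qed

definition tail_sums_nonneg :: "(int \<Rightarrow> int) \<Rightarrow> int \<Rightarrow> int \<Rightarrow> bool" where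
  "tail_sums_nonneg x j i \<longleftrightarrow> j < i \<and> (\<forall>k. j \<le> k \<and> k < i \<longrightarrow> ysum x k i \<ge> 0)"

lemma tail_sums_nonneg_trans:
  assumes ab: "tail_sums_nonneg x a b" and bc: "tail_sums_nonneg x b c"
  shows "tail_sums_nonneg x a c"
  unfolding tail_sums_nonneg_def
proof (intro conjI allI impI)
  show "a < c" using ab bc by (simp add: tail_sums_nonneg_def)
  fix k assume k: "a \<le> k \<and> k < c"
  show "0 \<le> ysum x k c"
  proof (cases "k < b")
    case True
    then have "ysum x k c = ysum x k b + ysum x b c"
      using bc by (intro ysum_split) (auto simp: tail_sums_nonneg_def)
    then show ?thesis using ab bc k True by (auto simp: tail_sums_nonneg_def)
  next
    case False
    then show ?thesis using bc k by (simp add: tail_sums_nonneg_def)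
  qed
qed

lemma tail_sums_nonneg_mono:
  "tail_sums_nonneg x a c \<Longrightarrow> a \<le> b \<Longrightarrow> b < c \<Longrightarrow> tail_sums_nonneg x b c"
  unfolding tail_sums_nonneg_def by auto

lemma record_map_eqI:
  assumes "j < m" "ysum x j m \<ge> 0" "\<And>n. j < n \<Longrightarrow> n < m \<Longrightarrow> ysum x j n < 0"
  shows "record_map x j = m"
proof -
  have "(LEAST n. n > j \<and> ysum x j n \<ge> 0) = m"
    using assms by (intro Least_equality) force+
  moreover have "{n. n > j \<and> ysum x j n \<ge> 0} \<noteq> {}" using assms by auto
  ultimately show ?thesis unfolding record_map_def by simp
qed

lemma first_nonneg_ysum_exists:
  assumes "j < n0" "ysum x j n0 \<ge> 0"
  obtains m where "j < m" "ysum x j m \<ge> 0" "\<And>n. j < n \<Longrightarrow> n < m \<Longrightarrow> ysum x j n < 0"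
proof
  define M where "M = {n \<in> {j<..n0}. ysum x j n \<ge> 0}"
  have "finite M" by (rule finite_subset[of _ "{j<..n0}"]) (auto simp: M_def)
  moreover have "n0 \<in> M" using assms by (simp add: M_def)
  ultimately have "Min M \<in> M" by (intro Min_in) auto
  then show "j < Min M" "ysum x j (Min M) \<ge> 0" by (auto simp: M_def)
  fix n assume "j < n" "n < Min M"
  with \<open>Min M \<in> M\<close> have "n \<notin> M" using Min_le[OF \<open>finite M\<close>, of n] by fastforce
  with \<open>j < n\<close> \<open>n < Min M\<close> \<open>Min M \<in> M\<close> show "ysum x j n < 0" by (auto simp: M_def)
qed

lemma record_map_fixed_or_tail_sums_nonneg:
  "record_map x j = j \<or> tail_sums_nonneg x j (record_map x j)"
proof (cases "\<exists>n>j. ysum x j n \<ge> 0")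
  case False
  then show ?thesis unfolding record_map_def by auto
next
  case True
  then obtain m where m: "j < m" "ysum x j m \<ge> 0" "\<And>n. j < n \<Longrightarrow> n < m \<Longrightarrow> ysum x j n < 0"
    using first_nonneg_ysum_exists by blast
  have "0 \<le> ysum x k m" if "j \<le> k" "k < m" for k
  proof (cases "k = j")
    case False
    have "ysum x j m = ysum x j k + ysum x k m" using that by (intro ysum_split) auto
    then show ?thesis using m that False by force
  qed (use m in simp)
  then have "tail_sums_nonneg x j m" using m by (simp add: tail_sums_nonneg_def)
  then show ?thesis using record_map_eqI[OF m] by simp
qed

lemma funpow_record_map_fixed_or_tail_sums_nonneg:
  "(record_map x ^^ n) j = j \<or> tail_sums_nonneg x j ((record_map x ^^ n) j)"
proof (induction n)
  case (Suc n)
  then show ?case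
    using record_map_fixed_or_tail_sums_nonneg[of x "(record_map x ^^ n) j"]
    by (auto intro: tail_sums_nonneg_trans)
qed simp

lemma tail_sums_nonneg_imp_funpow_record_map:
  "tail_sums_nonneg x j i \<Longrightarrow> \<exists>n::nat. n \<ge> 1 \<and> (record_map x ^^ n) j = i"
proof (induction "nat (i - j)" arbitrary: j rule: less_induct)
  case less
  have "j < i" "ysum x j i \<ge> 0" using less.prems by (auto simp: tail_sums_nonneg_def)
  then obtain m where m: "j < m" "ysum x j m \<ge> 0" "\<And>n. j < n \<Longrightarrow> n < m \<Longrightarrow> ysum x j n < 0"
    using first_nonneg_ysum_exists by blast
  have R: "record_map x j = m" using m by (rule record_map_eqI)
  have "m \<le> i" using m(3) \<open>j < i\<close> \<open>ysum x j i \<ge> 0\<close> by force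
  show ?case
  proof (cases "m = i")
    case True
    then show ?thesis using R by (intro exI[of _ 1]) simp
  next
    case False
    then have "tail_sums_nonneg x m i"
      using tail_sums_nonneg_mono[OF less.prems] m(1) \<open>m \<le> i\<close> by simp
    moreover have "nat (i - m) < nat (i - j)" using m(1) \<open>m \<le> i\<close> False by simp
    ultimately obtain n where "n \<ge> 1" "(record_map x ^^ n) m = i"
      using less.hyps by blast
    then have "(record_map x ^^ (n + 1)) j = i"
      using R by (simp del: funpow.simps add: funpow_Suc_right)
    then show ?thesis by (intro exI[of _ "n + 1"]) simp
  qed
qed

lemma descendants_eq_tail_sums_nonneg:
  "descendants x i = insert i {j. tail_sums_nonneg x j i}"
proof -
  have "(\<exists>n::nat. n \<ge> 1 \<and> (record_map x ^^ n) j = i) \<longleftrightarrow> tail_sums_nonneg x j i"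
    if "j \<noteq> i" for j
    using that funpow_record_map_fixed_or_tail_sums_nonneg[where x = x and j = j]
      tail_sums_nonneg_imp_funpow_record_map by metis
  moreover have "\<not> tail_sums_nonneg x i i" by (simp add: tail_sums_nonneg_def)
  ultimately show ?thesis unfolding descendants_def by auto
qed

lemma Inf_ereal_of_int_le_iff:
  fixes S :: "int set"
  assumes closed: "\<And>s k. s \<in> S \<Longrightarrow> s \<le> k \<Longrightarrow> k < i \<Longrightarrow> k \<in> S" and "j < i"
  shows "Inf ((\<lambda>s. ereal (of_int s)) ` S) \<le> ereal (of_int j) \<longleftrightarrow> j \<in> S"
proof
  assume "j \<in> S"
  then show "Inf ((\<lambda>s. ereal (of_int s)) ` S) \<le> ereal (of_int j)" by (intro Inf_lower) simp
next
  assume le: "Inf ((\<lambda>s. ereal (of_int s)) ` S) \<le> ereal (of_int j)"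
  show "j \<in> S"
  proof (rule ccontr)
    assume "j \<notin> S"
    then have "j + 1 \<le> s" if "s \<in> S" for s
      using closed[OF that, of j] \<open>j < i\<close> by force
    then have "ereal (of_int (j + 1)) \<le> Inf ((\<lambda>s. ereal (of_int s)) ` S)"
      by (intro Inf_greatest) (auto simp del: of_int_add)
    then have "ereal (of_int (j + 1)) \<le> ereal (of_int j)" using le by (rule order_trans)
    then show False by simp
  qed
qed

lemma Lx_le_iff:
  assumes "j \<le> i"
  shows "Lx x i \<le> ereal (of_int j) \<longleftrightarrow> j = i \<or> tail_sums_nonneg x j i"
proof -
  define S where "S = {j. tail_sums_nonneg x j i}"
  have Lx: "Lx x i = (if S = {} then ereal (of_int i) else Inf ((\<lambda>s. ereal (of_int s)) ` S))"
    unfolding Lx_def S_def tail_sums_nonneg_def by simp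
  show ?thesis
  proof (cases "S = {} \<or> j < i")
    case True
    then show ?thesis
      using Inf_ereal_of_int_le_iff[of S i j] tail_sums_nonneg_mono[of x _ i] assms
      unfolding Lx S_def by (auto simp: tail_sums_nonneg_def)
  next
    case False
    then obtain s where "s \<in> S" "j = i" using assms by auto
    have "Inf ((\<lambda>s. ereal (of_int s)) ` S) \<le> ereal (of_int s)"
      using \<open>s \<in> S\<close> by (intro Inf_lower) simp
    also have "\<dots> \<le> ereal (of_int i)"
      using \<open>s \<in> S\<close> by (simp add: S_def tail_sums_nonneg_def)
    finally show ?thesis using \<open>j = i\<close> \<open>s \<in> S\<close> unfolding Lx by auto
  qed
qed

theorem lemma2p16:
  fixes x :: "int \<Rightarrow> int" and i :: int
  shows "descendants x i = {j. Lx x i \<le> ereal (of_int j) \<and> j \<le> i}"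
  unfolding descendants_eq_tail_sums_nonneg
  using Lx_le_iff[of _ i x] by (auto simp: tail_sums_nonneg_def)

end
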